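(* Let $f(x)\in\mathbb C[x]$ be nonzero with $f(0)\ne0$. Then $f(x^m)$ divides $f(x^n)$ in $\mathbb C[x]$ whenever $m\mid n$ if and only if $f(x)$ is a nonzero constant multiple of $\operatorname{lcm}_{m\ge1}(x^m-1)^{h_m}$ (lcm in $\mathbb C[x]$) for some integers $h_m\ge0$, only finitely many of which are nonzero. *)

theory Defs
  imports "HOL-Computational_Algebra.Polynomial_Factorial" "HOL-Computational_Algebra.Field_as_Ring" Complex_Main
begin

definition subst_pow :: "'a::comm_semiring_1 poly \<Rightarrow> nat \<Rightarrow> 'a poly" where
  "subst_pow f m = pcompose f (monom 1 m)"

end

theory Submission
  imports
    Defs
    "HOL-Computational_Algebra.Fundamental_Theorem_Algebra"
    "HOL-Analysis.Complex_Transcendental"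
begin

text \<open>Over \<open>\<complex>\<close> divisibility is comparison of root multiplicities, and away from the origin
  the multiplicity of $f(x^m)$ at $b$ equals that of $f$ at $b^m$. Hence the divisibility condition
  says exactly that $\mathrm{ord}_a f \le \mathrm{ord}_{a^k} f$ for all $a$ and $k \ge 1$.
  Under this condition all powers of a root of $f$ are roots, so every root is a root of unity;
  and since a root of unity $a$ and $\zeta_d = e^{2\pi i/d}$, $d$ the order of $a$, are powers
  of each other, $\mathrm{ord}_a f$ is the maximum of $\mathrm{ord}_{\zeta_m} f$ over all $m$ with
  $a^m = 1$. That maximum is the multiplicity at $a$ of $\mathrm{lcm}_m (x^m - 1)^{h_m}$ with
  $h_m = \mathrm{ord}_{\zeta_m} f$, because $x^m - 1$ has simple roots, namely the $m$-th roots of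
  unity. Conversely, such an lcm satisfies the condition since $a^m = 1$ implies $(a^k)^m = 1$.\<close>

lemma order_power: "p \<noteq> 0 \<Longrightarrow> order a (p ^ n) = n * order a p"
  by (induction n) (auto simp: order_mult)

lemma alg_closed_poly_eq_smult_prod_proots:
  fixes p :: "'a::alg_closed_field poly"
  assumes "p \<noteq> 0"
  shows "p = smult (lead_coeff p) (\<Prod>x\<in>#proots p. [:-x, 1:])"
proof -
  obtain A where A: "p = smult (lead_coeff p) (\<Prod>x\<in>#A. [:-x, 1:])"
    using alg_closed_imp_factorization[OF assms] by blast
  have "proots (\<Prod>x\<in>#A. [:-x, 1:]) = A"
  proof (induction A)
    case (add x A)
    have "(\<Prod>x\<in>#A. [:-x, 1:]) \<noteq> 0"
      by (auto simp: prod_mset_zero_iff)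
    then show ?case
      using add by (simp add: proots_mult del: mult_pCons_left)
  qed simp
  moreover have "proots p = proots (\<Prod>x\<in>#A. [:-x, 1:])"
    using assms by (subst A) simp
  ultimately show ?thesis
    using A by simp
qed

lemma alg_closed_dvd_iff_order_le:
  fixes p q :: "'a::alg_closed_field poly"
  assumes "p \<noteq> 0" "q \<noteq> 0"
  shows "p dvd q \<longleftrightarrow> (\<forall>a. order a p \<le> order a q)"
proof
  assume "\<forall>a. order a p \<le> order a q"
  then have "proots p \<subseteq># proots q"
    using assms by (simp add: subseteq_mset_def)
  then have "(\<Prod>x\<in>#proots p. [:-x, 1:]) dvd (\<Prod>x\<in>#proots q. [:-x, 1:])"
    by (intro prod_mset_subset_imp_dvd image_mset_subseteq_mono)
  then have "smult (lead_coeff p) (\<Prod>x\<in>#proots p. [:-x, 1:])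
      dvd smult (lead_coeff q) (\<Prod>x\<in>#proots q. [:-x, 1:])"
    using assms by (simp add: smult_dvd_iff dvd_smult)
  then show "p dvd q"
    by (simp only: alg_closed_poly_eq_smult_prod_proots[OF assms(1), symmetric]
        alg_closed_poly_eq_smult_prod_proots[OF assms(2), symmetric])
qed (use assms dvd_imp_order_le in blast)

lemma alg_closed_poly_eq_smult_if_order_eq:
  fixes p q :: "'a::alg_closed_field poly"
  assumes "p \<noteq> 0" "q \<noteq> 0" "\<And>a. order a p = order a q"
  shows "p = smult (lead_coeff p / lead_coeff q) q"
proof -
  have "proots p = proots q"
    using assms by (intro multiset_eqI) simp
  then have "smult (lead_coeff p / lead_coeff q) (smult (lead_coeff q) (\<Prod>x\<in>#proots q. [:-x, 1:]))
      = smult (lead_coeff p) (\<Prod>x\<in>#proots p. [:-x, 1:])"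
    using assms by simp
  then show ?thesis
    by (simp only: alg_closed_poly_eq_smult_prod_proots[OF assms(1), symmetric]
        alg_closed_poly_eq_smult_prod_proots[OF assms(2), symmetric])
qed

lemma order_normalize: "order a (normalize p) = order a (p :: 'a::field_gcd poly)"
proof (cases "p = 0")
  case False
  then show ?thesis
    by (meson antisym dvd_imp_order_le dvd_normalize_iff normalize_dvd_iff normalize_eq_0_iff dvd_refl)
qed simp

lemma order_lcm:
  fixes p q :: "'a::field_gcd poly"
  assumes "p \<noteq> 0" "q \<noteq> 0"
  shows "order a (lcm p q) = max (order a p) (order a q)"
proof -
  have nonzero: "lcm p q \<noteq> 0" "gcd p q \<noteq> 0"
    using assms by (auto simp: lcm_eq_0_iff)
  have "gcd p q * lcm p q = normalize (p * q)"
    by (simp add: normalize_mult)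
  then have sum: "order a (gcd p q) + order a (lcm p q) = order a p + order a q"
    using nonzero assms by (metis order_mult mult_eq_0_iff normalize_eq_0_iff order_normalize)
  have "order a (gcd p q) \<le> min (order a p) (order a q)"
    using dvd_imp_order_le assms by (metis gcd_dvd1 gcd_dvd2 min.bounded_iff)
  moreover have "[:-a, 1:] ^ min (order a p) (order a q) dvd gcd p q"
    by (rule gcd_greatest) (meson dvd_trans le_imp_power_dvd min.cobounded1 min.cobounded2 order_1)+
  then have "min (order a p) (order a q) \<le> order a (gcd p q)"
    using nonzero order_divides by blast
  ultimately show ?thesis
    using sum by linarith
qed

lemma order_Lcm:
  fixes A :: "'a::field_gcd poly set"
  assumes "finite A" "0 \<notin> A"
  shows "order a (Lcm A) = Max (insert 0 (order a ` A))"
  using assms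
proof (induction A rule: finite_induct)
  case (insert p A)
  then have "Lcm A \<noteq> 0" "p \<noteq> 0"
    by (auto simp: Lcm_0_iff)
  with insert show ?case
    by (simp add: order_lcm insert_commute[of 0])
qed simp

lemma subst_pow_mult: "subst_pow (p * q) m = subst_pow p m * subst_pow q m"
  by (simp add: subst_pow_def pcompose_mult)

lemma subst_pow_power: "subst_pow (p ^ n) m = subst_pow p m ^ n"
  by (induction n) (simp_all add: subst_pow_def pcompose_1 pcompose_mult)

lemma poly_subst_pow: "poly (subst_pow p m) x = poly p (x ^ m)"
  by (simp add: subst_pow_def poly_pcompose poly_monom)

lemma subst_pow_eq_0_iff: "0 < m \<Longrightarrow> subst_pow p m = 0 \<longleftrightarrow> p = (0 :: 'a::idom poly)"
  by (simp add: subst_pow_def pcompose_eq_0_iff degree_monom_eq)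

lemma monom_minus_one_eq_subst_pow: "monom 1 m - 1 = subst_pow [:-1, 1 :: 'a::comm_ring_1:] m"
  by (simp add: subst_pow_def pcompose_pCons one_pCons)

lemma order_subst_pow_linear:
  fixes b c :: "'a::field_char_0"
  assumes "b \<noteq> 0" "0 < m"
  shows "order b (subst_pow [:-c, 1:] m) = (if b ^ m = c then 1 else 0)"
proof (cases "b ^ m = c")
  case True
  let ?g = "subst_pow [:-c, 1:] m"
  have "pderiv ?g = monom (of_nat m) (m - 1)"
    by (simp add: subst_pow_def pderiv_pcompose pderiv_monom pderiv_pCons)
  then have "order b (pderiv ?g) = 0"
    using assms by (intro order_0I) (simp add: poly_monom)
  moreover have "?g \<noteq> 0" "poly ?g b = 0"
    using assms True by (simp_all add: subst_pow_eq_0_iff poly_subst_pow)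
  ultimately show ?thesis
    using order_pderiv[of ?g b] True by simp
qed (auto intro!: order_0I simp: poly_subst_pow)

lemma order_subst_pow:
  fixes f :: "'a::field_char_0 poly"
  assumes "b \<noteq> 0" "0 < m" "f \<noteq> 0"
  shows "order b (subst_pow f m) = order (b ^ m) f"
proof -
  have "f \<noteq> 0 \<longrightarrow> order b (subst_pow f m) = order (b ^ m) f"
  proof (induction f rule: poly_root_order_induct)
    case (no_roots p)
    then show ?case
      by (simp add: order_0I poly_subst_pow)
  next
    case (root p c n)
    show ?case
    proof
      assume "[:-c, 1:] ^ n * p \<noteq> 0"
      then have "p \<noteq> 0" "subst_pow p m \<noteq> 0" "subst_pow [:-c, 1:] m \<noteq> 0"
        using assms by (auto simp: subst_pow_eq_0_iff)
      then show "order b (subst_pow ([:-c, 1:] ^ n * p) m) = order (b ^ m) ([:-c, 1:] ^ n * p)"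
        using root.IH assms
        by (simp add: subst_pow_mult subst_pow_power order_mult order_power order_subst_pow_linear
            order_power_n_n[of _ 1, simplified] order_0I)
    qed
  qed simp
  then show ?thesis
    using assms by blast
qed

lemma subst_pow_dvd_subst_pow_iff:
  fixes f :: "'a::{alg_closed_field, field_char_0} poly"
  assumes "f \<noteq> 0" "poly f 0 \<noteq> 0" "0 < m" "0 < n"
  shows "subst_pow f m dvd subst_pow f n \<longleftrightarrow> (\<forall>b. order (b ^ m) f \<le> order (b ^ n) f)"
proof -
  have "order b (subst_pow f k) = order (b ^ k) f" if "0 < k" for b k
  proof (cases "b = 0")
    case True
    then show ?thesis
      using assms(2) that by (simp add: order_0I poly_subst_pow zero_power)
  qed (use order_subst_pow assms(1) that in blast)
  then show ?thesis
    using assms by (simp add: alg_closed_dvd_iff_order_le subst_pow_eq_0_iff)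
qed

lemma subst_pow_dvd_iff_order_le_order_power:
  fixes f :: "'a::{alg_closed_field, field_char_0} poly"
  assumes "f \<noteq> 0" "poly f 0 \<noteq> 0"
  shows "(\<forall>m n. 0 < m \<longrightarrow> 0 < n \<longrightarrow> m dvd n \<longrightarrow> subst_pow f m dvd subst_pow f n)
     \<longleftrightarrow> (\<forall>a k. 0 < k \<longrightarrow> order a f \<le> order (a ^ k) f)"
proof
  assume "\<forall>m n. 0 < m \<longrightarrow> 0 < n \<longrightarrow> m dvd n \<longrightarrow> subst_pow f m dvd subst_pow f n"
  then show "\<forall>a k. 0 < k \<longrightarrow> order a f \<le> order (a ^ k) f"
    using assms subst_pow_dvd_subst_pow_iff[of f 1] by simp
next
  assume "\<forall>a k. 0 < k \<longrightarrow> order a f \<le> order (a ^ k) f"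
  then show "\<forall>m n. 0 < m \<longrightarrow> 0 < n \<longrightarrow> m dvd n \<longrightarrow> subst_pow f m dvd subst_pow f n"
    using assms by (auto simp: subst_pow_dvd_subst_pow_iff power_mult elim!: dvdE)
qed

definition lcm_pow_minus_one :: "(nat \<Rightarrow> nat) \<Rightarrow> 'a::field_gcd poly" where
  "lcm_pow_minus_one h = Lcm ((\<lambda>m. (monom 1 m - 1) ^ h m) ` {m. 0 < m})"

lemma order_monom_minus_one:
  fixes a :: "'a::field_char_0"
  assumes "0 < m"
  shows "order a (monom 1 m - 1) = (if a ^ m = 1 then 1 else 0)"
proof (cases "a = 0")
  case True
  with assms show ?thesis
    by (simp add: order_0I poly_monom zero_power)
next
  case False
  with assms show ?thesis
    using order_subst_pow_linear[of a m 1] by (simp add: monom_minus_one_eq_subst_pow)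
qed

lemma finite_image_powers_monom_minus_one:
  assumes "finite {m. 0 < m \<and> h m \<noteq> 0}"
  shows "finite ((\<lambda>m. (monom 1 m - 1 :: 'a::comm_ring_1 poly) ^ h m) ` {m. 0 < m})"
proof (rule finite_subset)
  show "(\<lambda>m. (monom 1 m - 1 :: 'a poly) ^ h m) ` {m. 0 < m}
     \<subseteq> insert 1 ((\<lambda>m. (monom 1 m - 1) ^ h m) ` {m. 0 < m \<and> h m \<noteq> 0})"
    by (auto simp: image_iff) (metis not_gr0 power_0)
qed (use assms in blast)

lemma lcm_pow_minus_one_nonzero:
  assumes "finite {m. 0 < m \<and> h m \<noteq> 0}"
  shows "lcm_pow_minus_one h \<noteq> (0 :: 'a::field_gcd poly)"
  using Lcm_0_iff[OF finite_image_powers_monom_minus_one[OF assms]]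
  unfolding lcm_pow_minus_one_def by (auto simp: monom_eq_1_iff)

lemma order_lcm_pow_minus_one:
  fixes a :: "'a::{field_char_0, field_gcd}"
  assumes "finite {m. 0 < m \<and> h m \<noteq> 0}"
  shows "order a (lcm_pow_minus_one h) = Max (insert 0 (h ` {m. 0 < m \<and> a ^ m = 1}))"
proof -
  let ?P = "(\<lambda>m. (monom 1 m - 1 :: 'a poly) ^ h m) ` {m. 0 < m}"
  have "0 \<notin> ?P"
    by (auto simp: monom_eq_1_iff)
  then have "order a (lcm_pow_minus_one h) = Max (insert 0 (order a ` ?P))"
    unfolding lcm_pow_minus_one_def
    by (rule order_Lcm[OF finite_image_powers_monom_minus_one[OF assms]])
  also have "order a ` ?P = (\<lambda>m. if a ^ m = 1 then h m else 0) ` {m. 0 < m}"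
    unfolding image_image
    by (intro image_cong) (simp_all add: order_power order_monom_minus_one monom_eq_1_iff)
  also have "insert 0 \<dots> = insert 0 (h ` {m. 0 < m \<and> a ^ m = 1})"
    by auto
  finally show ?thesis .
qed

lemma order_lcm_pow_minus_one_le_order_power:
  fixes a :: "'a::{field_char_0, field_gcd}"
  assumes "finite {m. 0 < m \<and> h m \<noteq> 0}"
  shows "order a (lcm_pow_minus_one h) \<le> order (a ^ k) (lcm_pow_minus_one h)"
proof -
  have "h ` {m. 0 < m \<and> (a ^ k) ^ m = 1} \<subseteq> insert 0 (h ` {m. 0 < m \<and> h m \<noteq> 0})"
    by auto
  then have "finite (insert 0 (h ` {m. 0 < m \<and> (a ^ k) ^ m = 1}))"
    using assms by (simp add: finite_subset)
  moreover have "(a ^ k) ^ m = (a ^ m) ^ k" for m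
    by (simp flip: power_mult add: mult.commute)
  then have "insert 0 (h ` {m. 0 < m \<and> a ^ m = 1}) \<subseteq> insert 0 (h ` {m. 0 < m \<and> (a ^ k) ^ m = 1})"
    by auto
  ultimately show ?thesis
    unfolding order_lcm_pow_minus_one[OF assms] by (intro Max_mono) auto
qed

lemma root_of_unity_if_powers_are_roots:
  fixes p :: "'a::idom poly"
  assumes "p \<noteq> 0" "a \<noteq> 0" "\<And>k. 0 < k \<Longrightarrow> poly p (a ^ k) = 0"
  shows "\<exists>n>0. a ^ n = 1"
proof -
  have "range (\<lambda>k. a ^ Suc k) \<subseteq> {x. poly p x = 0}"
    using assms(3) by blast
  then have "finite (range (\<lambda>k. a ^ Suc k))"
    using poly_roots_finite[OF assms(1)] by (rule finite_subset)
  then have "\<not> inj (\<lambda>k. a ^ Suc k)"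
    using finite_imageD infinite_UNIV_nat by blast
  then obtain i j where "i \<noteq> j" "a ^ Suc i = a ^ Suc j"
    unfolding inj_def by blast
  then obtain i j where "i < j" "a ^ Suc i = a ^ Suc j"
    by (metis linorder_neqE_nat)
  moreover have "a ^ Suc j = a ^ Suc i * a ^ (j - i)"
    using \<open>i < j\<close> by (simp flip: power_add)
  ultimately have "a ^ (j - i) = 1"
    using assms(2) by simp
  then show ?thesis
    using \<open>i < j\<close> by (intro exI[of _ "j - i"]) simp
qed

definition unit_root :: "nat \<Rightarrow> complex" where
  "unit_root n = exp (2 * of_real pi * \<i> / of_nat n)"

lemma unit_root_power: "unit_root n ^ j = exp (2 * of_real pi * \<i> * of_nat j / of_nat n)"
  unfolding unit_root_def exp_of_nat_mult[symmetric] by (simp add: field_simps)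

lemma unit_root_power_eq_1_iff: "0 < n \<Longrightarrow> unit_root n ^ j = 1 \<longleftrightarrow> n dvd j"
  by (simp add: unit_root_power complex_root_unity_eq_1)

lemma inj_on_unit_root: "inj_on unit_root {n. 0 < n}"
proof (rule inj_onI)
  fix m n :: nat
  assume "m \<in> {n. 0 < n}" "n \<in> {n. 0 < n}" "unit_root m = unit_root n"
  then have "m dvd n" "n dvd m"
    by (metis dvd_refl mem_Collect_eq unit_root_power_eq_1_iff)+
  then show "m = n"
    by (rule dvd_antisym)
qed

lemma root_of_unity_eq_unit_root_power:
  assumes "0 < n" "a ^ n = 1"
  obtains j where "0 < j" "a = unit_root n ^ j"
proof -
  obtain j where "a = unit_root n ^ j"
    using complex_roots_unity[of n] assms by (auto simp: unit_root_power)
  then show ?thesis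
    using that[of j] that[of n] assms unit_root_power_eq_1_iff[of n n] by (cases "j = 0") auto
qed

text \<open>By B\'ezout, if $a = \zeta_n^j$ and $g = \gcd(j, n)$ then some power of $a$ is
  $\zeta_n^g = \zeta_{n/g}$.\<close>
lemma root_of_unity_power_eq_unit_root:
  assumes "0 < n" "a ^ n = 1"
  obtains d k where "0 < d" "0 < k" "a ^ d = 1" "a ^ k = unit_root d"
proof -
  obtain j where j: "0 < j" "a = unit_root n ^ j"
    using root_of_unity_eq_unit_root_power assms by blast
  define g where "g = gcd j n"
  define d where "d = n div g"
  have "0 < g" "n = d * g"
    using assms by (simp_all add: g_def d_def)
  then have "0 < d"
    using assms by (simp add: gr0I)
  obtain x y where xy: "j * x = n * y + g"
    using bezout_nat[of j n] j by (auto simp: g_def)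
  then have "0 < x"
    using \<open>0 < g\<close> by (cases x) auto
  have "a ^ x = unit_root n ^ (n * y) * unit_root n ^ g"
    using j xy by (simp flip: power_mult power_add)
  also have "\<dots> = unit_root n ^ g"
    using assms by (simp add: unit_root_power_eq_1_iff)
  also have "\<dots> = unit_root d"
    using \<open>n = d * g\<close> \<open>0 < g\<close> by (simp add: unit_root_power) (simp add: unit_root_def)
  finally have "a ^ x = unit_root d" .
  moreover have "g dvd j"
    by (simp add: g_def)
  then have "n dvd j * d"
    using \<open>n = d * g\<close> by (auto elim!: dvdE simp: mult_ac)
  then have "a ^ d = 1"
    using j assms by (simp add: unit_root_power_eq_1_iff flip: power_mult)
  ultimately show ?thesis
    using that \<open>0 < d\<close> \<open>0 < x\<close> by blast
qed

lemma finite_order_unit_root_nonzero: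
  fixes f :: "complex poly"
  assumes "f \<noteq> 0"
  shows "finite {m. 0 < m \<and> order (unit_root m) f \<noteq> 0}"
proof (rule inj_on_finite)
  show "inj_on unit_root {m. 0 < m \<and> order (unit_root m) f \<noteq> 0}"
    using inj_on_unit_root by (rule inj_on_subset) blast
  show "unit_root ` {m. 0 < m \<and> order (unit_root m) f \<noteq> 0} \<subseteq> {x. poly f x = 0}"
    by (auto simp: order_root)
qed (use poly_roots_finite assms in blast)

lemma order_eq_Max_order_unit_root:
  fixes f :: "complex poly"
  assumes "f \<noteq> 0" "poly f 0 \<noteq> 0"
    and mono: "\<And>a k. 0 < k \<Longrightarrow> order a f \<le> order (a ^ k) f"
  shows "order a f = Max (insert 0 ((\<lambda>m. order (unit_root m) f) ` {m. 0 < m \<and> a ^ m = 1}))"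
    (is "_ = Max ?V")
proof (rule antisym)
  have bound: "order (unit_root m) f \<le> order a f" if m: "0 < m" "a ^ m = 1" for m
  proof -
    obtain j where "0 < j" "a = unit_root m ^ j"
      using root_of_unity_eq_unit_root_power[OF m] .
    then show ?thesis
      using mono[of j "unit_root m"] by simp
  qed
  then have "?V \<subseteq> {..order a f}"
    by auto
  then have "finite ?V"
    by (rule finite_subset) simp
  then show "Max ?V \<le> order a f"
    using \<open>?V \<subseteq> {..order a f}\<close> by (intro Max.boundedI) auto
  show "order a f \<le> Max ?V"
  proof (cases "order a f = 0")
    case False
    then have roots: "poly f (a ^ k) = 0" if "0 < k" for k
      using mono[OF that, of a] assms(1) by (simp add: order_root)
    then have "a \<noteq> 0"
      using assms(2) roots[of 1] by auto
    then obtain n where "0 < n" "a ^ n = 1"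
      using root_of_unity_if_powers_are_roots[OF assms(1) _ roots] by blast
    then obtain d k where dk: "0 < d" "0 < k" "a ^ d = 1" "a ^ k = unit_root d"
      by (rule root_of_unity_power_eq_unit_root)
    then have "order a f \<le> order (unit_root d) f"
      using mono[of k a] by simp
    also have "\<dots> \<le> Max ?V"
      using dk by (intro Max_ge[OF \<open>finite ?V\<close>]) auto
    finally show ?thesis .
  qed simp
qed

lemma eq_smult_lcm_pow_minus_one_if_order_le_order_power:
  fixes f :: "complex poly"
  assumes "f \<noteq> 0" "poly f 0 \<noteq> 0"
    and mono: "\<forall>a k. 0 < k \<longrightarrow> order a f \<le> order (a ^ k) f"
  shows "\<exists>c h. c \<noteq> 0 \<and> finite {m. 0 < m \<and> h m \<noteq> 0} \<and> f = smult c (lcm_pow_minus_one h)"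
proof -
  define h where "h m = order (unit_root m) f" for m
  have fin: "finite {m. 0 < m \<and> h m \<noteq> 0}"
    unfolding h_def using assms(1) by (rule finite_order_unit_root_nonzero)
  let ?L = "lcm_pow_minus_one h :: complex poly"
  have "order a f = order a ?L" for a
  proof -
    have "order a f = Max (insert 0 (h ` {m. 0 < m \<and> a ^ m = 1}))"
      unfolding h_def by (rule order_eq_Max_order_unit_root[OF assms(1,2)]) (use mono in blast)
    also have "\<dots> = order a ?L"
      by (rule order_lcm_pow_minus_one[OF fin, symmetric])
    finally show ?thesis .
  qed
  moreover have "?L \<noteq> 0"
    using fin by (rule lcm_pow_minus_one_nonzero)
  ultimately have "f = smult (lead_coeff f / lead_coeff ?L) ?L"
    using assms(1) by (intro alg_closed_poly_eq_smult_if_order_eq)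
  moreover have "lead_coeff f / lead_coeff ?L \<noteq> 0"
    using assms(1) \<open>?L \<noteq> 0\<close> by simp
  ultimately show ?thesis
    using fin by blast
qed

theorem proposition1:
  fixes f :: "complex poly"
  assumes "f \<noteq> 0" and "poly f 0 \<noteq> 0"
  shows "(\<forall>m n :: nat. 0 < m \<longrightarrow> 0 < n \<longrightarrow> m dvd n \<longrightarrow> subst_pow f m dvd subst_pow f n)
     \<longleftrightarrow> (\<exists>(c::complex) (h::nat \<Rightarrow> nat). c \<noteq> 0 \<and> finite {m. 0 < m \<and> h m \<noteq> 0} \<and>
            f = smult c (Lcm ((\<lambda>m. (monom 1 m - 1 :: complex poly) ^ h m) ` {m. 0 < m})))"
proof -
  have "(\<forall>m n :: nat. 0 < m \<longrightarrow> 0 < n \<longrightarrow> m dvd n \<longrightarrow> subst_pow f m dvd subst_pow f n)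
      \<longleftrightarrow> (\<forall>a k. 0 < k \<longrightarrow> order a f \<le> order (a ^ k) f)"
    by (rule subst_pow_dvd_iff_order_le_order_power[OF assms])
  also have "\<dots> \<longleftrightarrow> (\<exists>c h. c \<noteq> 0 \<and> finite {m. 0 < m \<and> h m \<noteq> 0} \<and> f = smult c (lcm_pow_minus_one h))"
    using eq_smult_lcm_pow_minus_one_if_order_le_order_power[OF assms]
    by (auto simp: order_smult order_lcm_pow_minus_one_le_order_power)
  finally show ?thesis
    unfolding lcm_pow_minus_one_def .
qed

end
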